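(* Let $\mathcal{X}=\langle P,K,V\rangle$ be a polyhedral model. The logical equivalence relation $\equiv$ on $P$ has only finitely many equivalence classes, and for each equivalence class $C$ there is an SLCS formula $\phi^C$ such that for all $x\in P$: $\mathcal{X},x\models\phi^C\iff x\in C$.
   Context: A $d$-simplex $\sigma\subseteq\mathbb{R}^m$ is the convex hull of $d+1$ affinely independent points $v_0,\dots,v_d$ (its vertices); the simplexes spanned by subsets of the vertices (including the empty simplex) are its faces, and $\tau\preceq\sigma$ means $\tau$ is a face of $\sigma$. The relative interior of $\sigma$ is $\tilde\sigma=\{\sum_i\lambda_iv_i:\lambda_i\in(0,1],\sum_i\lambda_i=1\}$. A simplicial complex $K$ is a finite set of simplexes of $\mathbb{R}^m$ closed under taking faces and such that the intersection of any two of its simplexes is a face of both. Its polyhedron is $|K|=\bigcup K$, with the subspace topology of $\mathbb{R}^m$; $\mathcal{C}$ and $\mathcal{I}$ denote closure and interior in this space. The cells of $K$ are the sets $\tilde\sigma$ for nonempty $\sigma\in K$; they form a partition $\tilde K$ of $|K|$. A path in a space $P$ is a continuous $\pi:[0,1]\to P$; $\pi(S)=\{\pi(s):s\in S\}$. Fix a finite set $AP$ of atomic propositions. A polyhedral model is $\mathcal{X}=\langle P,K,V\rangle$ with $K$ a simplicial complex, $P=|K|$, and $V:AP\to\mathcal{P}(P)$ such that each $V(p)$ is a union of cells of $K$ ($K$ is then called coherent with the model). SLCS formulas: $\phi::=\top\mid p\mid\neg\phi\mid\phi\wedge\phi\mid\Box\phi\mid\gamma(\phi,\phi)$, $p\in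 AP$. Semantics at $x\in P$, with $[\![\phi]\!]=\{x\in P:\mathcal{X},x\models\phi\}$: $\top$ always holds; $x\models p$ iff $x\in V(p)$; Boolean connectives as usual; $x\models\Box\phi$ iff $x\in\mathcal{I}([\![\phi]\!])$; $x\models\gamma(\phi,\psi)$ iff there is a path $\pi$ in $P$ with $\pi(0)=x$, $\pi((0,1))\subseteq[\![\phi]\!]$ and $\pi(1)\in[\![\psi]\!]$. Logical equivalence $\equiv$ on $P$: $x\equiv y$ iff $x$ and $y$ satisfy exactly the same SLCS formulas. *)

theory Defs
  imports "HOL-Analysis.Analysis"
begin

text \<open>Simplexes in an arbitrary Euclidean space 'a (playing the role of R^m).
  A simplex is the convex hull of a finite affinely independent vertex set
  (the empty vertex set gives the empty simplex).\<close>

definition is_simplex :: "'a::euclidean_space set \<Rightarrow> bool" where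
  "is_simplex \<sigma> \<longleftrightarrow> (\<exists>V. finite V \<and> \<not> affine_dependent V \<and> \<sigma> = convex hull V)"

definition simplex_face :: "'a::euclidean_space set \<Rightarrow> 'a set \<Rightarrow> bool" where
  "simplex_face \<tau> \<sigma> \<longleftrightarrow> (\<exists>V W. finite V \<and> \<not> affine_dependent V \<and> \<sigma> = convex hull V
        \<and> W \<subseteq> V \<and> \<tau> = convex hull W)"

definition open_simplex :: "'a::euclidean_space set \<Rightarrow> 'a set" where
  "open_simplex V = {x. \<exists>l. (\<forall>v\<in>V. 0 < l v \<and> l v \<le> 1) \<and> sum l V = 1
                          \<and> x = (\<Sum>v\<in>V. l v *\<^sub>R v)}"

definition simplicial_complex :: "'a::euclidean_space set set \<Rightarrow> bool" where
  "simplicial_complex K \<longleftrightarrow> finite K \<and> (\<forall>\<sigma>\<in>K. is_simplex \<sigma>)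
     \<and> (\<forall>\<sigma>\<in>K. \<forall>\<tau>. simplex_face \<tau> \<sigma> \<longrightarrow> \<tau> \<in> K)
     \<and> (\<forall>\<sigma>\<in>K. \<forall>\<tau>\<in>K. simplex_face (\<sigma> \<inter> \<tau>) \<sigma> \<and> simplex_face (\<sigma> \<inter> \<tau>) \<tau>)"

definition cells :: "'a::euclidean_space set set \<Rightarrow> 'a set set" where
  "cells K = {C. \<exists>V. finite V \<and> \<not> affine_dependent V \<and> V \<noteq> {}
                   \<and> convex hull V \<in> K \<and> C = open_simplex V}"

text \<open>Polyhedral model: K simplicial complex, P = |K|, each V(p) a union of cells.\<close>
definition polyhedral_model :: "'a::euclidean_space set set \<Rightarrow> ('p \<Rightarrow> 'a set) \<Rightarrow> bool" where
  "polyhedral_model K Val \<longleftrightarrow> simplicial_complex K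
     \<and> (\<forall>p. \<exists>S. S \<subseteq> cells K \<and> Val p = \<Union>S)"

datatype 'p slcs = Top | Atom 'p | Neg "'p slcs" | Conj "'p slcs" "'p slcs"
  | Box "'p slcs" | Gamma "'p slcs" "'p slcs"

fun sem :: "'a::euclidean_space set set \<Rightarrow> ('p \<Rightarrow> 'a set) \<Rightarrow> 'p slcs \<Rightarrow> 'a set" where
  "sem K Val Top = \<Union>K"
| "sem K Val (Atom p) = \<Union>K \<inter> Val p"
| "sem K Val (Neg \<phi>) = \<Union>K - sem K Val \<phi>"
| "sem K Val (Conj \<phi> \<psi>) = sem K Val \<phi> \<inter> sem K Val \<psi>"
| "sem K Val (Box \<phi>) = (top_of_set (\<Union>K)) interior_of (sem K Val \<phi>)"
| "sem K Val (Gamma \<phi> \<psi>) = {x \<in> \<Union>K. \<exists>\<pi>. path \<pi> \<and> path_image \<pi> \<subseteq> \<Union>K \<and> \<pi> 0 = x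
        \<and> (\<forall>s\<in>{0<..<1}. \<pi> s \<in> sem K Val \<phi>) \<and> \<pi> 1 \<in> sem K Val \<psi>}"

definition sat :: "'a::euclidean_space set set \<Rightarrow> ('p \<Rightarrow> 'a set) \<Rightarrow> 'a \<Rightarrow> 'p slcs \<Rightarrow> bool" where
  "sat K Val x \<phi> \<longleftrightarrow> x \<in> sem K Val \<phi>"

definition log_equiv :: "'a::euclidean_space set set \<Rightarrow> ('p \<Rightarrow> 'a set) \<Rightarrow> ('a \<times> 'a) set" where
  "log_equiv K Val = {(x, y). x \<in> \<Union>K \<and> y \<in> \<Union>K \<and> (\<forall>\<phi>. sat K Val x \<phi> \<longleftrightarrow> sat K Val y \<phi>)}"

end

theory Submission
  imports Defs
begin

text \<open>Fix positive weights c on the vertices. Rescaling the barycentric coordinates a of a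
  point of |K| to c u * a u (and normalising) is well defined, because two simplexes containing
  a point meet in a common face that carries all its nonzero coordinates. On each simplex it is a
  quotient of two affine maps, so it is continuous, and the weights 1/c invert it: it is a
  homeomorphism of |K| mapping every cell onto itself. Such a homeomorphism preserves the
  valuation and therefore the meaning of every formula, and any two points of a cell are related
  by a suitable choice of weights. Hence every class of \<equiv> is a union of cells, of which there are
  finitely many, and a class is defined by the conjunction of finitely many formulas, each
  separating it from one of the other classes.\<close>

section \<open>Barycentric coordinates in a simplicial complex\<close>

lemma affine_independent_coefficients_eq:
  fixes U :: "'a::euclidean_space set"
  assumes "finite U" "\<not> affine_dependent U" "sum a U = 1" "sum b U = 1"
    "(\<Sum>u\<in>U. a u *\<^sub>R u) = (\<Sum>u\<in>U. b u *\<^sub>R u)" "u \<in> U"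
  shows "a u = b u"
proof (rule ccontr)
  assume "a u \<noteq> b u"
  moreover have "sum (\<lambda>v. a v - b v) U = 0"
    using assms(3,4) by (simp add: sum_subtractf)
  moreover have "(\<Sum>v\<in>U. (a v - b v) *\<^sub>R v) = 0"
    using assms(5) by (simp add: scaleR_diff_left sum_subtractf)
  ultimately have "affine_dependent U"
    using assms(6) unfolding affine_dependent_explicit_finite[OF assms(1)]
    by (intro exI[of _ "\<lambda>v. a v - b v"]) auto
  with assms(2) show False by simp
qed

lemma affine_independent_convex_hull_eq_imp_eq:
  fixes V W :: "'a::euclidean_space set"
  assumes "\<not> affine_dependent V" "\<not> affine_dependent W" "convex hull V = convex hull W"
  shows "V = W"
proof (rule set_eqI)
  fix x
  have "x \<in> V \<longleftrightarrow> x extreme_point_of (convex hull V)"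
    by (rule extreme_point_of_convex_hull_affine_independent[OF assms(1), symmetric])
  also have "\<dots> \<longleftrightarrow> x \<in> W"
    unfolding assms(3) by (rule extreme_point_of_convex_hull_affine_independent[OF assms(2)])
  finally show "x \<in> V \<longleftrightarrow> x \<in> W" .
qed

lemma simplicial_complexD:
  assumes "simplicial_complex K" "\<sigma> \<in> K"
  shows "is_simplex \<sigma>" "simplex_face \<tau> \<sigma> \<Longrightarrow> \<tau> \<in> K"
    "\<sigma>' \<in> K \<Longrightarrow> simplex_face (\<sigma> \<inter> \<sigma>') \<sigma>"
    "\<sigma>' \<in> K \<Longrightarrow> simplex_face (\<sigma> \<inter> \<sigma>') \<sigma>'"
  using assms unfolding simplicial_complex_def by blast+

definition simplex_vertices :: "'a::euclidean_space set set \<Rightarrow> 'a set \<Rightarrow> bool" where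
  "simplex_vertices K U \<longleftrightarrow> finite U \<and> \<not> affine_dependent U \<and> convex hull U \<in> K"

lemma simplicial_complex_simplex_vertices:
  assumes "simplicial_complex K" "\<sigma> \<in> K"
  obtains U where "simplex_vertices K U" "\<sigma> = convex hull U"
  using simplicial_complexD(1)[OF assms] unfolding is_simplex_def simplex_vertices_def
  by (metis assms(2))

lemma simplicial_complex_face_vertices:
  assumes "simplicial_complex K" "simplex_vertices K U" "W \<subseteq> U"
  shows "simplex_vertices K W"
proof -
  have "simplex_face (convex hull W) (convex hull U)"
    using assms(2,3) unfolding simplex_face_def simplex_vertices_def by blast
  then have "convex hull W \<in> K"
    using simplicial_complexD(2) assms(1,2) unfolding simplex_vertices_def by blast
  then show ?thesis
    using assms(2,3) affine_independent_subset[of U W] finite_subset[of W U]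
    unfolding simplex_vertices_def by blast
qed

lemma simplicial_complex_inter_vertices:
  assumes K: "simplicial_complex K" and U1: "simplex_vertices K U1" and U2: "simplex_vertices K U2"
  obtains W where "W \<subseteq> U1" "W \<subseteq> U2" "convex hull U1 \<inter> convex hull U2 = convex hull W"
proof -
  have "simplex_face (convex hull U1 \<inter> convex hull U2) (convex hull U1)"
    and "simplex_face (convex hull U1 \<inter> convex hull U2) (convex hull U2)"
    using simplicial_complexD(3,4)[OF K] U1 U2 unfolding simplex_vertices_def by blast+
  then obtain V1 W1 V2 W2 where
    V1: "\<not> affine_dependent V1" "convex hull U1 = convex hull V1" "W1 \<subseteq> V1"
      "convex hull U1 \<inter> convex hull U2 = convex hull W1" and
    V2: "\<not> affine_dependent V2" "convex hull U2 = convex hull V2" "W2 \<subseteq> V2"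
      "convex hull U1 \<inter> convex hull U2 = convex hull W2"
    unfolding simplex_face_def by blast
  have "V1 = U1" "V2 = U2"
    using affine_independent_convex_hull_eq_imp_eq V1(1,2) V2(1,2) U1 U2
    unfolding simplex_vertices_def by metis+
  moreover have "W1 = W2"
    using affine_independent_convex_hull_eq_imp_eq affine_independent_subset V1 V2 by metis
  ultimately show thesis
    using that V1(3,4) V2(3) by blast
qed

definition barycentric :: "'a::euclidean_space set \<Rightarrow> ('a \<Rightarrow> real) \<Rightarrow> 'a \<Rightarrow> bool" where
  "barycentric U a z \<longleftrightarrow> (\<forall>u\<in>U. 0 \<le> a u) \<and> sum a U = 1 \<and> z = (\<Sum>u\<in>U. a u *\<^sub>R u)"

lemma convex_hull_finite_barycentric:
  "finite U \<Longrightarrow> z \<in> convex hull U \<longleftrightarrow> (\<exists>a. barycentric U a z)"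
  unfolding barycentric_def by (auto simp: convex_hull_finite)

lemma barycentric_unique:
  assumes "finite U" "\<not> affine_dependent U" "barycentric U a z" "barycentric U b z" "u \<in> U"
  shows "a u = b u"
proof (rule affine_independent_coefficients_eq[OF assms(1,2) _ _ _ assms(5)])
  show "sum a U = 1" "sum b U = 1"
    using assms(3,4) unfolding barycentric_def by blast+
  have "z = (\<Sum>u\<in>U. a u *\<^sub>R u)" "z = (\<Sum>u\<in>U. b u *\<^sub>R u)"
    using assms(3,4) unfolding barycentric_def by blast+
  then show "(\<Sum>u\<in>U. a u *\<^sub>R u) = (\<Sum>u\<in>U. b u *\<^sub>R u)"
    by simp
qed

lemma simplicial_complex_barycentric:
  assumes "simplicial_complex K" "z \<in> \<Union>K"
  obtains U a where "simplex_vertices K U" "barycentric U a z"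
  using assms convex_hull_finite_barycentric
  by (metis UnionE simplex_vertices_def simplicial_complex_simplex_vertices)

lemma barycentric_restrict_iff:
  assumes "finite U" "W \<subseteq> U" "\<forall>u\<in>U - W. a u = 0"
  shows "barycentric U a z \<longleftrightarrow> barycentric W a z"
proof -
  have "sum a U = sum a W" "(\<Sum>u\<in>U. a u *\<^sub>R u) = (\<Sum>u\<in>W. a u *\<^sub>R u)"
    using assms by (auto intro: sum.mono_neutral_right)
  then show ?thesis
    using assms(2,3) unfolding barycentric_def by auto
qed

lemma barycentric_vanishes_off_face:
  assumes "finite U" "\<not> affine_dependent U" "W \<subseteq> U" "barycentric U a z"
    "z \<in> convex hull W" "u \<in> U - W"
  shows "a u = 0"
proof -
  have "finite W" using assms(1,3) finite_subset by blast
  then obtain b where b: "barycentric W b z"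
    using assms(5) convex_hull_finite_barycentric by blast
  define b' where "b' v = (if v \<in> W then b v else 0)" for v
  have "sum b' W = sum b W" "(\<Sum>v\<in>W. b' v *\<^sub>R v) = (\<Sum>v\<in>W. b v *\<^sub>R v)"
    by (auto simp: b'_def intro!: sum.cong)
  then have "barycentric W b' z"
    using b unfolding barycentric_def by (simp add: b'_def)
  moreover have "\<forall>v\<in>U - W. b' v = 0"
    by (simp add: b'_def)
  ultimately have "barycentric U b' z"
    using barycentric_restrict_iff[OF assms(1,3)] by blast
  then have "a u = b' u"
    using barycentric_unique[OF assms(1,2,4)] assms(6) by blast
  then show ?thesis using assms(6) by (simp add: b'_def)
qed

lemma barycentric_simplicial_complex_common_face:
  assumes K: "simplicial_complex K" and U1: "simplex_vertices K U1" and U2: "simplex_vertices K U2"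
    and a1: "barycentric U1 a1 z" and a2: "barycentric U2 a2 z"
  obtains W where "W \<subseteq> U1" "W \<subseteq> U2" "\<forall>u\<in>U1 - W. a1 u = 0" "\<forall>u\<in>U2 - W. a2 u = 0"
    "\<forall>u\<in>W. a1 u = a2 u"
proof -
  obtain W where W: "W \<subseteq> U1" "W \<subseteq> U2" "convex hull U1 \<inter> convex hull U2 = convex hull W"
    using simplicial_complex_inter_vertices[OF K U1 U2] .
  have "z \<in> convex hull W"
    using W(3) a1 a2 U1 U2 convex_hull_finite_barycentric unfolding simplex_vertices_def by blast
  then have zero1: "\<forall>u\<in>U1 - W. a1 u = 0" and zero2: "\<forall>u\<in>U2 - W. a2 u = 0"
    using barycentric_vanishes_off_face W(1,2) a1 a2 U1 U2 unfolding simplex_vertices_def by blast+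
  have "barycentric W a1 z" "barycentric W a2 z"
    using barycentric_restrict_iff W(1,2) zero1 zero2 a1 a2 U1 U2
    unfolding simplex_vertices_def by blast+
  moreover have "finite W" "\<not> affine_dependent W"
    using W(1) U1 affine_independent_subset finite_subset unfolding simplex_vertices_def by blast+
  ultimately have "\<forall>u\<in>W. a1 u = a2 u"
    using barycentric_unique by blast
  then show thesis using that W(1,2) zero1 zero2 by blast
qed

section \<open>Reweighting barycentric coordinates\<close>

definition reweight :: "('a \<Rightarrow> real) \<Rightarrow> 'a::euclidean_space set \<Rightarrow> ('a \<Rightarrow> real) \<Rightarrow> 'a" where
  "reweight c U a = inverse (\<Sum>u\<in>U. c u * a u) *\<^sub>R (\<Sum>u\<in>U. (c u * a u) *\<^sub>R u)"

lemma reweight_restrict: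
  assumes "finite U" "W \<subseteq> U" "\<forall>u\<in>U - W. a u = 0"
  shows "reweight c U a = reweight c W a"
proof -
  have "(\<Sum>u\<in>U. c u * a u) = (\<Sum>u\<in>W. c u * a u)"
    "(\<Sum>u\<in>U. (c u * a u) *\<^sub>R u) = (\<Sum>u\<in>W. (c u * a u) *\<^sub>R u)"
    using assms by (auto intro: sum.mono_neutral_right)
  then show ?thesis by (simp add: reweight_def)
qed

lemma reweight_eq_if_proportional:
  assumes "barycentric U b z" "k \<noteq> 0" "\<forall>u\<in>U. c u * a u = k * b u"
  shows "reweight c U a = z"
proof -
  have "(\<Sum>u\<in>U. c u * a u) = (\<Sum>u\<in>U. k * b u)"
    using assms(3) by (auto intro!: sum.cong)
  also have "\<dots> = k"
    using assms(1) by (simp add: barycentric_def flip: sum_distrib_left)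
  finally have denominator: "(\<Sum>u\<in>U. c u * a u) = k" .
  have "(\<Sum>u\<in>U. (c u * a u) *\<^sub>R u) = (\<Sum>u\<in>U. (k * b u) *\<^sub>R u)"
    using assms(3) by (auto intro!: sum.cong)
  also have "\<dots> = k *\<^sub>R (\<Sum>u\<in>U. b u *\<^sub>R u)"
    by (simp add: scaleR_sum_right)
  also have "\<dots> = k *\<^sub>R z"
    using assms(1) by (simp add: barycentric_def)
  finally show ?thesis
    using denominator assms(2) by (simp add: reweight_def)
qed

lemma barycentric_weighted_sum_pos:
  assumes "finite U" "barycentric U a z" "\<forall>u. c u > 0"
  shows "(\<Sum>u\<in>U. c u * a u) > 0"
proof -
  obtain u where u: "u \<in> U" "a u > 0"
  proof (rule ccontr)
    assume "\<not> thesis"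
    then have "\<forall>u\<in>U. a u \<le> 0"
      using that by (meson not_less)
    then have "sum a U \<le> 0"
      by (simp add: sum_nonpos)
    then show False
      using assms(2) by (simp add: barycentric_def)
  qed
  have "c u * a u \<le> (\<Sum>u\<in>U. c u * a u)"
    using assms u(1) unfolding barycentric_def
    by (intro member_le_sum) (auto intro: mult_nonneg_nonneg less_imp_le)
  moreover have "c u * a u > 0" using u assms(3) by simp
  ultimately show ?thesis by linarith
qed

lemma barycentric_reweight:
  assumes "finite U" "barycentric U a z" "\<forall>u. c u > 0"
  shows "barycentric U (\<lambda>u. c u * a u / (\<Sum>v\<in>U. c v * a v)) (reweight c U a)"
proof -
  let ?D = "\<Sum>v\<in>U. c v * a v"
  have D: "?D > 0" by (rule barycentric_weighted_sum_pos[OF assms])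
  have "\<forall>u\<in>U. 0 \<le> c u * a u / ?D"
    using assms(2,3) D unfolding barycentric_def by (simp add: less_imp_le)
  moreover have "(\<Sum>u\<in>U. c u * a u / ?D) = 1"
    using D by (simp flip: sum_divide_distrib)
  moreover have "reweight c U a = (\<Sum>u\<in>U. (c u * a u / ?D) *\<^sub>R u)"
    by (simp add: reweight_def scaleR_sum_right divide_inverse mult.commute)
  ultimately show ?thesis
    unfolding barycentric_def by blast
qed

lemma reweight_well_defined:
  assumes K: "simplicial_complex K" and U1: "simplex_vertices K U1" and U2: "simplex_vertices K U2"
    and a1: "barycentric U1 a1 z" and a2: "barycentric U2 a2 z"
  shows "reweight c U1 a1 = reweight c U2 a2"
proof -
  obtain W where W: "W \<subseteq> U1" "W \<subseteq> U2" "\<forall>u\<in>U1 - W. a1 u = 0" "\<forall>u\<in>U2 - W. a2 u = 0"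
    "\<forall>u\<in>W. a1 u = a2 u"
    using barycentric_simplicial_complex_common_face[OF K U1 U2 a1 a2] .
  have "finite U1" "finite U2"
    using U1 U2 by (simp_all add: simplex_vertices_def)
  have "reweight c U1 a1 = reweight c W a1"
    by (rule reweight_restrict[OF \<open>finite U1\<close> W(1,3)])
  also have "\<dots> = reweight c W a2"
    using W(5) unfolding reweight_def by (simp cong: sum.cong)
  also have "\<dots> = reweight c U2 a2"
    by (rule reweight_restrict[OF \<open>finite U2\<close> W(2,4), symmetric])
  finally show ?thesis .
qed

text \<open>The choice is immaterial on \<open>\<Union>K\<close> by \<open>reweight_well_defined\<close>; off \<open>\<Union>K\<close> the value is
  arbitrary and never used.\<close>

definition reweight_map :: "'a::euclidean_space set set \<Rightarrow> ('a \<Rightarrow> real) \<Rightarrow> 'a \<Rightarrow> 'a" where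
  "reweight_map K c z = (SOME y. \<exists>U a. simplex_vertices K U \<and> barycentric U a z \<and> y = reweight c U a)"

lemma reweight_map_eq:
  assumes "simplicial_complex K" "simplex_vertices K U" "barycentric U a z"
  shows "reweight_map K c z = reweight c U a"
proof -
  let ?P = "\<lambda>y. \<exists>U a. simplex_vertices K U \<and> barycentric U a z \<and> y = reweight c U a"
  have "?P (reweight c U a)" using assms(2,3) by blast
  then have "?P (reweight_map K c z)"
    unfolding reweight_map_def by (rule someI)
  then obtain U' a' where "simplex_vertices K U'" "barycentric U' a' z"
    "reweight_map K c z = reweight c U' a'"
    by blast
  then show ?thesis
    using reweight_well_defined[OF assms(1) _ assms(2) _ assms(3)] by metis
qed

lemma reweight_map_inverse:
  assumes K: "simplicial_complex K" and z: "z \<in> \<Union>K" and c: "\<forall>u. c u > 0"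
  shows "reweight_map K c z \<in> \<Union>K"
    and "reweight_map K (\<lambda>u. inverse (c u)) (reweight_map K c z) = z"
proof -
  obtain U a where U: "simplex_vertices K U" and a: "barycentric U a z"
    using simplicial_complex_barycentric[OF K z] .
  let ?D = "\<Sum>v\<in>U. c v * a v"
  have "finite U" using U by (simp add: simplex_vertices_def)
  have D: "?D > 0"
    by (rule barycentric_weighted_sum_pos[OF \<open>finite U\<close> a c])
  have b: "barycentric U (\<lambda>u. c u * a u / ?D) (reweight_map K c z)"
    unfolding reweight_map_eq[OF K U a] by (rule barycentric_reweight[OF \<open>finite U\<close> a c])
  then show "reweight_map K c z \<in> \<Union>K"
    using U b convex_hull_finite_barycentric[OF \<open>finite U\<close>]
    unfolding simplex_vertices_def by blast
  have "c u \<noteq> 0" for u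
    using c by (metis less_irrefl)
  then have "\<forall>u\<in>U. inverse (c u) * (c u * a u / ?D) = inverse ?D * a u"
    by (simp add: divide_inverse)
  then show "reweight_map K (\<lambda>u. inverse (c u)) (reweight_map K c z) = z"
    unfolding reweight_map_eq[OF K U b] using D
    by (intro reweight_eq_if_proportional[OF a, where k = "inverse ?D"]) auto
qed

lemma affine_independent_extension:
  fixes U :: "'a::euclidean_space set" and F :: "'a \<Rightarrow> 'b::real_normed_vector"
  assumes "finite U" "\<not> affine_dependent U" "U \<noteq> {}"
  shows "\<exists>A. continuous_on UNIV A
    \<and> (\<forall>a. sum a U = 1 \<longrightarrow> A (\<Sum>u\<in>U. a u *\<^sub>R u) = (\<Sum>u\<in>U. a u *\<^sub>R F u))"
proof -
  obtain u0 where u0: "u0 \<in> U" using assms(3) by blast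
  define S where "S = U - {u0}"
  have US: "U = insert u0 S" "u0 \<notin> S" using u0 by (auto simp: S_def)
  have "independent ((\<lambda>x. -u0 + x) ` S)"
    using assms(2) affine_dependent_iff_dependent[OF US(2)] US(1) by simp
  then obtain L where L: "linear L" "\<forall>x\<in>(\<lambda>x. -u0 + x) ` S. L x = F (x + u0) - F u0"
    using linear_independent_extend[of _ "\<lambda>x. F (x + u0) - F u0"] by blast
  have L_vertex: "L (u - u0) = F u - F u0" if "u \<in> U" for u
  proof (cases "u = u0")
    case True
    then show ?thesis using linear_0[OF L(1)] by simp
  next
    case False
    then have "-u0 + u \<in> (\<lambda>x. -u0 + x) ` S" using that by (auto simp: S_def)
    then show ?thesis using L(2) by (auto simp: algebra_simps)
  qed
  define A where "A z = F u0 + L (z - u0)" for z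
  have "continuous_on UNIV L"
    using L(1) linear_conv_bounded_linear linear_continuous_on by blast
  then have "continuous_on UNIV (\<lambda>z. L (z - u0))"
    by (rule continuous_on_compose2) (auto intro: continuous_intros)
  then have "continuous_on UNIV A"
    unfolding A_def by (intro continuous_intros)
  moreover have "A (\<Sum>u\<in>U. a u *\<^sub>R u) = (\<Sum>u\<in>U. a u *\<^sub>R F u)" if a: "sum a U = 1" for a
  proof -
    have "(\<Sum>u\<in>U. a u *\<^sub>R u) - u0 = (\<Sum>u\<in>U. a u *\<^sub>R (u - u0))"
      using a by (simp add: scaleR_diff_right sum_subtractf flip: scaleR_sum_left)
    then have "L ((\<Sum>u\<in>U. a u *\<^sub>R u) - u0) = (\<Sum>u\<in>U. a u *\<^sub>R (F u - F u0))"
      using L_vertex by (simp add: linear_sum[OF L(1)] linear_scale[OF L(1)])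
    also have "\<dots> = (\<Sum>u\<in>U. a u *\<^sub>R F u) - F u0"
      using a by (simp add: scaleR_diff_right sum_subtractf flip: scaleR_sum_left)
    finally show ?thesis by (simp add: A_def)
  qed
  ultimately show ?thesis by blast
qed

lemma reweight_map_continuous_on_simplex:
  assumes K: "simplicial_complex K" and U: "simplex_vertices K U" and c: "\<forall>u. c u > 0"
  shows "continuous_on (convex hull U) (reweight_map K c)"
proof (cases "U = {}")
  case True
  then show ?thesis by simp
next
  case False
  have U': "finite U" "\<not> affine_dependent U"
    using U by (simp_all add: simplex_vertices_def)
  obtain N where N: "continuous_on UNIV N"
    "\<forall>a. sum a U = 1 \<longrightarrow> N (\<Sum>u\<in>U. a u *\<^sub>R u) = (\<Sum>u\<in>U. a u *\<^sub>R (c u *\<^sub>R u))"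
    using affine_independent_extension[OF U' False, of "\<lambda>u. c u *\<^sub>R u"] by blast
  obtain D where D: "continuous_on UNIV D"
    "\<forall>a. sum a U = 1 \<longrightarrow> D (\<Sum>u\<in>U. a u *\<^sub>R u) = (\<Sum>u\<in>U. a u *\<^sub>R c u)"
    using affine_independent_extension[OF U' False, of c] by blast
  have quotient: "D z \<noteq> 0 \<and> reweight_map K c z = inverse (D z) *\<^sub>R N z"
    if z: "z \<in> convex hull U" for z
  proof -
    obtain a where a: "barycentric U a z"
      using z unfolding convex_hull_finite_barycentric[OF U'(1)] by blast
    have "D z = (\<Sum>u\<in>U. c u * a u)" "N z = (\<Sum>u\<in>U. (c u * a u) *\<^sub>R u)"
      using a N(2) D(2) by (simp_all add: barycentric_def mult.commute)
    then show ?thesis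
      using barycentric_weighted_sum_pos[OF U'(1) a c] reweight_map_eq[OF K U a]
      by (simp add: reweight_def)
  qed
  have "continuous_on (convex hull U) (\<lambda>z. inverse (D z) *\<^sub>R N z)"
    using quotient
    by (intro continuous_intros continuous_on_subset[OF N(1)] continuous_on_subset[OF D(1)]) auto
  then show ?thesis
    by (rule continuous_on_eq) (use quotient in simp)
qed

lemma reweight_map_continuous_on:
  assumes K: "simplicial_complex K" and c: "\<forall>u. c u > 0"
  shows "continuous_on (\<Union>K) (reweight_map K c)"
proof -
  have "continuous_on (\<Union>\<sigma>\<in>K. \<sigma>) (reweight_map K c)"
  proof (rule continuous_on_closed_Union)
    show "finite K" using K by (simp add: simplicial_complex_def)
  next
    fix \<sigma> assume "\<sigma> \<in> K"
    then obtain U where U: "simplex_vertices K U" "\<sigma> = convex hull U"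
      using simplicial_complex_simplex_vertices[OF K] by blast
    then show "closed \<sigma>"
      by (simp add: simplex_vertices_def compact_imp_closed finite_imp_compact_convex_hull)
    show "continuous_on \<sigma> (reweight_map K c)"
      unfolding U(2) by (rule reweight_map_continuous_on_simplex[OF K U(1) c])
  qed
  then show ?thesis by simp
qed

lemma reweight_map_homeomorphism:
  assumes K: "simplicial_complex K" and c: "\<forall>u. c u > 0"
  shows "homeomorphism (\<Union>K) (\<Union>K) (reweight_map K c) (reweight_map K (\<lambda>u. inverse (c u)))"
proof -
  have c': "\<forall>u. inverse (c u) > 0" using c by simp
  show ?thesis
  proof (rule homeomorphismI)
    show "continuous_on (\<Union>K) (reweight_map K c)"
      by (rule reweight_map_continuous_on[OF K c])
    show "continuous_on (\<Union>K) (reweight_map K (\<lambda>u. inverse (c u)))"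
      by (rule reweight_map_continuous_on[OF K c'])
    show "reweight_map K c ` \<Union>K \<subseteq> \<Union>K"
      by (rule image_subsetI) (rule reweight_map_inverse(1)[OF K _ c])
    show "reweight_map K (\<lambda>u. inverse (c u)) ` \<Union>K \<subseteq> \<Union>K"
      by (rule image_subsetI) (rule reweight_map_inverse(1)[OF K _ c'])
    show "reweight_map K (\<lambda>u. inverse (c u)) (reweight_map K c z) = z" if "z \<in> \<Union>K" for z
      using reweight_map_inverse(2)[OF K that c] .
    show "reweight_map K c (reweight_map K (\<lambda>u. inverse (c u)) z) = z" if "z \<in> \<Union>K" for z
      using reweight_map_inverse(2)[OF K that c'] by simp
  qed
qed

section \<open>Cells\<close>

lemma mem_cells:
  "C \<in> cells K \<longleftrightarrow> (\<exists>W. simplex_vertices K W \<and> W \<noteq> {} \<and> C = open_simplex W)"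
  unfolding cells_def simplex_vertices_def by blast

lemma open_simplex_barycentric:
  assumes "finite W"
  shows "z \<in> open_simplex W \<longleftrightarrow> (\<exists>l. barycentric W l z \<and> (\<forall>v\<in>W. 0 < l v))"
proof
  assume "z \<in> open_simplex W"
  then obtain l where l: "\<forall>v\<in>W. 0 < l v \<and> l v \<le> 1" "sum l W = 1" "z = (\<Sum>v\<in>W. l v *\<^sub>R v)"
    unfolding open_simplex_def by blast
  then have "barycentric W l z"
    unfolding barycentric_def by (simp add: less_imp_le)
  then show "\<exists>l. barycentric W l z \<and> (\<forall>v\<in>W. 0 < l v)"
    using l(1) by blast
next
  assume "\<exists>l. barycentric W l z \<and> (\<forall>v\<in>W. 0 < l v)"
  then obtain l where l: "barycentric W l z" "\<forall>v\<in>W. 0 < l v"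
    by blast
  have "l v \<le> 1" if "v \<in> W" for v
  proof -
    have "l v \<le> sum l W"
      using assms l(2) that by (intro member_le_sum) (simp_all add: less_imp_le)
    then show ?thesis using l(1) by (simp add: barycentric_def)
  qed
  then show "z \<in> open_simplex W"
    using l unfolding open_simplex_def barycentric_def by blast
qed

lemma cells_subset_Union:
  assumes "C \<in> cells K"
  shows "C \<subseteq> \<Union>K"
proof
  fix z assume "z \<in> C"
  obtain W where W: "simplex_vertices K W" "C = open_simplex W"
    using assms unfolding mem_cells by blast
  then have "finite W" by (simp add: simplex_vertices_def)
  then have "z \<in> convex hull W"
    using \<open>z \<in> C\<close> W(2) open_simplex_barycentric convex_hull_finite_barycentric by blast
  then show "z \<in> \<Union>K"
    using W(1) unfolding simplex_vertices_def by blast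
qed

lemma simplicial_complex_Union_cells:
  assumes K: "simplicial_complex K"
  shows "\<Union>(cells K) = \<Union>K"
proof
  show "\<Union>(cells K) \<subseteq> \<Union>K"
    using cells_subset_Union by blast
  show "\<Union>K \<subseteq> \<Union>(cells K)"
  proof
    fix z assume "z \<in> \<Union>K"
    then obtain U a where U: "simplex_vertices K U" and a: "barycentric U a z"
      using simplicial_complex_barycentric[OF K] by blast
    define S where "S = {u \<in> U. a u > 0}"
    have "finite U" using U by (simp add: simplex_vertices_def)
    have "S \<subseteq> U" by (auto simp: S_def)
    moreover have "\<forall>u\<in>U - S. a u = 0"
      using a by (force simp: S_def barycentric_def)
    ultimately have "barycentric S a z"
      using barycentric_restrict_iff[OF \<open>finite U\<close>] a by blast
    moreover have "S \<noteq> {}"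
      using \<open>barycentric S a z\<close> by (auto simp: barycentric_def)
    moreover have "simplex_vertices K S"
      by (rule simplicial_complex_face_vertices[OF K U \<open>S \<subseteq> U\<close>])
    moreover have "\<forall>u\<in>S. 0 < a u" by (simp add: S_def)
    ultimately show "z \<in> \<Union>(cells K)"
      using open_simplex_barycentric mem_cells unfolding simplex_vertices_def by blast
  qed
qed

lemma finite_cells:
  assumes "simplicial_complex K"
  shows "finite (cells K)"
proof -
  have "cells K \<subseteq> (\<lambda>\<sigma>. open_simplex {x. x extreme_point_of \<sigma>}) ` K"
  proof
    fix C assume "C \<in> cells K"
    then obtain V where V: "simplex_vertices K V" "C = open_simplex V"
      unfolding mem_cells by blast
    then have "{x. x extreme_point_of (convex hull V)} = V"
      using extreme_point_of_convex_hull_affine_independent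
      unfolding simplex_vertices_def by blast
    then show "C \<in> (\<lambda>\<sigma>. open_simplex {x. x extreme_point_of \<sigma>}) ` K"
      using V unfolding simplex_vertices_def by (metis image_eqI)
  qed
  moreover have "finite K"
    using assms by (simp add: simplicial_complex_def)
  ultimately show ?thesis
    using finite_subset by blast
qed

lemma reweight_map_cell:
  assumes K: "simplicial_complex K" and C: "C \<in> cells K" and z: "z \<in> C"
    and c: "\<forall>u. c u > 0"
  shows "reweight_map K c z \<in> C"
proof -
  obtain W where W: "simplex_vertices K W" "C = open_simplex W"
    using C unfolding mem_cells by blast
  have "finite W" using W(1) by (simp add: simplex_vertices_def)
  obtain l where l: "barycentric W l z" "\<forall>v\<in>W. 0 < l v"
    using z W(2) open_simplex_barycentric[OF \<open>finite W\<close>] by blast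
  let ?D = "\<Sum>v\<in>W. c v * l v"
  have "?D > 0"
    by (rule barycentric_weighted_sum_pos[OF \<open>finite W\<close> l(1) c])
  then have "\<forall>v\<in>W. 0 < c v * l v / ?D"
    using l(2) c by simp
  moreover have "barycentric W (\<lambda>u. c u * l u / ?D) (reweight_map K c z)"
    unfolding reweight_map_eq[OF K W(1) l(1)] by (rule barycentric_reweight[OF \<open>finite W\<close> l(1) c])
  ultimately show ?thesis
    using W(2) open_simplex_barycentric[OF \<open>finite W\<close>] by blast
qed

section \<open>Invariance of the semantics\<close>

lemma sem_subset: "sem K Val \<phi> \<subseteq> \<Union>K"
  by (induction \<phi>) (use interior_of_subset_topspace[of "top_of_set (\<Union>K)"] in auto)

lemma homeomorphism_self_mem_iff:
  assumes "homeomorphism S S h g" "z \<in> S" "h ` A \<subseteq> A" "g ` A \<subseteq> A"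
  shows "h z \<in> A \<longleftrightarrow> z \<in> A"
  using assms by (metis homeomorphism_apply1 image_subset_iff)

lemma homeomorphism_self_inverse_invariant:
  assumes "homeomorphism S S h g" "\<forall>z\<in>S. h z \<in> A \<longleftrightarrow> z \<in> A"
  shows "\<forall>z\<in>S. g z \<in> A \<longleftrightarrow> z \<in> A"
  using assms by (metis homeomorphism_apply2 homeomorphism_image2 imageI)

lemma interior_of_homeomorphism_image_subset:
  assumes hom: "homeomorphism S S h g" and inv: "\<forall>z\<in>S. h z \<in> A \<longleftrightarrow> z \<in> A"
  shows "h ` (top_of_set S interior_of A) \<subseteq> top_of_set S interior_of A"
proof
  fix y assume "y \<in> h ` (top_of_set S interior_of A)"
  then obtain z T where T: "y = h z" "openin (top_of_set S) T" "z \<in> T" "T \<subseteq> A"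
    by (auto simp: interior_of_def)
  have "h ` T \<subseteq> A"
    using inv T(2,4) openin_imp_subset by fastforce
  then show "y \<in> top_of_set S interior_of A"
    using homeomorphism_imp_open_map[OF hom T(2)] T(1,3) by (auto simp: interior_of_def)
qed

lemma sem_Gamma_homeomorphism_image_subset:
  assumes hom: "homeomorphism (\<Union>K) (\<Union>K) h g"
    and inv\<phi>: "\<forall>z\<in>\<Union>K. h z \<in> sem K Val \<phi> \<longleftrightarrow> z \<in> sem K Val \<phi>"
    and inv\<psi>: "\<forall>z\<in>\<Union>K. h z \<in> sem K Val \<psi> \<longleftrightarrow> z \<in> sem K Val \<psi>"
  shows "h ` sem K Val (Gamma \<phi> \<psi>) \<subseteq> sem K Val (Gamma \<phi> \<psi>)"
proof
  fix y assume "y \<in> h ` sem K Val (Gamma \<phi> \<psi>)"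
  then obtain z \<pi> where \<pi>: "y = h z" "z \<in> \<Union>K" "path \<pi>" "path_image \<pi> \<subseteq> \<Union>K" "\<pi> 0 = z"
    "\<forall>s\<in>{0<..<1}. \<pi> s \<in> sem K Val \<phi>" "\<pi> 1 \<in> sem K Val \<psi>"
    by auto
  have on_path: "\<pi> s \<in> \<Union>K" if "s \<in> {0..1}" for s
    using \<pi>(4) that unfolding path_image_def by blast
  have maps: "h ` \<Union>K = \<Union>K"
    using homeomorphism_image1[OF hom] .
  have "path (h \<circ> \<pi>)"
    using continuous_on_subset[OF homeomorphism_cont1[OF hom] \<pi>(4)]
    by (rule path_continuous_image[OF \<pi>(3)])
  moreover have "path_image (h \<circ> \<pi>) \<subseteq> \<Union>K"
    using \<pi>(4) maps by (metis image_mono path_image_compose)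
  moreover have "\<forall>s\<in>{0<..<1}. (h \<circ> \<pi>) s \<in> sem K Val \<phi>"
  proof
    fix s :: real assume "s \<in> {0<..<1}"
    then show "(h \<circ> \<pi>) s \<in> sem K Val \<phi>"
      using \<pi>(6) inv\<phi>[rule_format, OF on_path, of s] by simp
  qed
  moreover have "(h \<circ> \<pi>) 1 \<in> sem K Val \<psi>"
    using \<pi>(7) inv\<psi>[rule_format, OF on_path, of 1] by simp
  moreover have "h z \<in> \<Union>K"
    using \<pi>(2) maps by blast
  ultimately show "y \<in> sem K Val (Gamma \<phi> \<psi>)"
    using \<pi>(1,5) by (auto intro!: exI[of _ "h \<circ> \<pi>"])
qed

lemma sem_homeomorphism_invariant:
  assumes hom: "homeomorphism (\<Union>K) (\<Union>K) h g"
    and V: "\<forall>p. \<forall>z\<in>\<Union>K. h z \<in> Val p \<longleftrightarrow> z \<in> Val p"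
  shows "\<forall>z\<in>\<Union>K. h z \<in> sem K Val \<phi> \<longleftrightarrow> z \<in> sem K Val \<phi>"
proof (induction \<phi>)
  case Top
  then show ?case using homeomorphism_image1[OF hom] by auto
next
  case (Atom p)
  show ?case
  proof
    fix z assume z: "z \<in> \<Union>K"
    then have "h z \<in> \<Union>K" using homeomorphism_image1[OF hom] by blast
    then show "h z \<in> sem K Val (Atom p) \<longleftrightarrow> z \<in> sem K Val (Atom p)"
      using V[rule_format, OF z] z by simp
  qed
next
  case (Neg \<phi>)
  show ?case
  proof
    fix z assume z: "z \<in> \<Union>K"
    then have "h z \<in> \<Union>K" using homeomorphism_image1[OF hom] by blast
    then show "h z \<in> sem K Val (Neg \<phi>) \<longleftrightarrow> z \<in> sem K Val (Neg \<phi>)"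
      using Neg.IH[rule_format, OF z] z by simp
  qed
next
  case (Conj \<phi> \<psi>)
  then show ?case by simp
next
  \<comment> \<open>For \<open>Box\<close> and \<open>Gamma\<close> both directions are image inclusions, one for \<open>h\<close> and one for \<open>g\<close>.\<close>
  case (Box \<phi>)
  have hom': "homeomorphism (\<Union>K) (\<Union>K) g h"
    using homeomorphism_symD[OF hom] .
  show ?case
    using homeomorphism_self_mem_iff[OF hom _
        interior_of_homeomorphism_image_subset[OF hom Box.IH]
        interior_of_homeomorphism_image_subset[OF hom' homeomorphism_self_inverse_invariant[OF hom Box.IH]]]
    by simp
next
  case (Gamma \<phi> \<psi>)
  have hom': "homeomorphism (\<Union>K) (\<Union>K) g h"
    using homeomorphism_symD[OF hom] .
  show ?case
    using homeomorphism_self_mem_iff[OF hom _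
        sem_Gamma_homeomorphism_image_subset[OF hom Gamma.IH]
        sem_Gamma_homeomorphism_image_subset[OF hom'
          homeomorphism_self_inverse_invariant[OF hom Gamma.IH(1)]
          homeomorphism_self_inverse_invariant[OF hom Gamma.IH(2)]]]
    by blast
qed

lemma cellwise_homeomorphism_preserves_valuation:
  assumes "polyhedral_model K Val" "homeomorphism (\<Union>K) (\<Union>K) h g"
    and "\<And>C. C \<in> cells K \<Longrightarrow> h ` C \<subseteq> C" "\<And>C. C \<in> cells K \<Longrightarrow> g ` C \<subseteq> C"
  shows "\<forall>p. \<forall>z\<in>\<Union>K. h z \<in> Val p \<longleftrightarrow> z \<in> Val p"
proof (intro allI ballI)
  fix p z assume z: "z \<in> \<Union>K"
  obtain S where S: "S \<subseteq> cells K" "Val p = \<Union>S"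
    using assms(1) unfolding polyhedral_model_def by blast
  have "h z \<in> C \<longleftrightarrow> z \<in> C" if "C \<in> S" for C
  proof -
    have C: "C \<in> cells K" using S(1) that by blast
    show ?thesis
      by (rule homeomorphism_self_mem_iff[OF assms(2) z assms(3)[OF C] assms(4)[OF C]])
  qed
  then show "h z \<in> Val p \<longleftrightarrow> z \<in> Val p"
    using S(2) by blast
qed

lemma reweight_map_sem_invariant:
  assumes PM: "polyhedral_model K Val" and c: "\<forall>u. c u > 0"
  shows "\<forall>z\<in>\<Union>K. reweight_map K c z \<in> sem K Val \<phi> \<longleftrightarrow> z \<in> sem K Val \<phi>"
proof -
  have K: "simplicial_complex K" using PM by (simp add: polyhedral_model_def)
  let ?h = "reweight_map K c" and ?g = "reweight_map K (\<lambda>u. inverse (c u))"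
  have hom: "homeomorphism (\<Union>K) (\<Union>K) ?h ?g"
    by (rule reweight_map_homeomorphism[OF K c])
  have c': "\<forall>u. inverse (c u) > 0" using c by simp
  have "\<forall>p. \<forall>z\<in>\<Union>K. ?h z \<in> Val p \<longleftrightarrow> z \<in> Val p"
  proof (rule cellwise_homeomorphism_preserves_valuation[OF PM hom])
    show "?h ` D \<subseteq> D" if "D \<in> cells K" for D
      using reweight_map_cell[OF K that _ c] by blast
    show "?g ` D \<subseteq> D" if "D \<in> cells K" for D
      using reweight_map_cell[OF K that _ c'] by blast
  qed
  then show ?thesis
    by (rule sem_homeomorphism_invariant[OF hom])
qed

lemma cell_subset_log_equiv:
  assumes PM: "polyhedral_model K Val" and C: "C \<in> cells K"
  shows "C \<times> C \<subseteq> log_equiv K Val"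
proof clarify
  fix x y assume x: "x \<in> C" and y: "y \<in> C"
  have K: "simplicial_complex K" using PM by (simp add: polyhedral_model_def)
  obtain W where W: "simplex_vertices K W" "C = open_simplex W"
    using C unfolding mem_cells by blast
  have "finite W" using W(1) by (simp add: simplex_vertices_def)
  obtain lx where lx: "barycentric W lx x" "\<forall>v\<in>W. 0 < lx v"
    using x W(2) open_simplex_barycentric[OF \<open>finite W\<close>] by blast
  obtain ly where ly: "barycentric W ly y" "\<forall>v\<in>W. 0 < ly v"
    using y W(2) open_simplex_barycentric[OF \<open>finite W\<close>] by blast
  define c where "c v = (if v \<in> W then ly v / lx v else 1)" for v
  have c: "\<forall>u. c u > 0" using lx(2) ly(2) by (simp add: c_def)
  have "\<forall>v\<in>W. c v * lx v = 1 * ly v"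
    using lx(2) by (auto simp: c_def)
  then have "reweight_map K c x = y"
    unfolding reweight_map_eq[OF K W(1) lx(1)]
    by (rule reweight_eq_if_proportional[OF ly(1), rotated]) simp
  moreover have "x \<in> \<Union>K" "y \<in> \<Union>K"
    using x y cells_subset_Union[OF C] by blast+
  ultimately have "x \<in> sem K Val \<phi> \<longleftrightarrow> y \<in> sem K Val \<phi>" for \<phi>
    using reweight_map_sem_invariant[OF PM c] by blast
  with \<open>x \<in> \<Union>K\<close> \<open>y \<in> \<Union>K\<close> show "(x, y) \<in> log_equiv K Val"
    by (simp add: log_equiv_def sat_def)
qed

section \<open>Classes of logical equivalence\<close>

lemma finite_quotient_if_finite_cover:
  assumes "equiv A R" "finite F" "A \<subseteq> \<Union>F" "\<And>C. C \<in> F \<Longrightarrow> C \<times> C \<subseteq> R"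
  shows "finite (A // R)"
proof -
  have "A // R \<subseteq> (\<lambda>C. R `` C) ` F"
  proof
    fix D assume "D \<in> A // R"
    then obtain x where x: "x \<in> A" "D = R `` {x}"
      by (rule quotientE)
    then obtain C where C: "C \<in> F" "x \<in> C"
      using assms(3) by blast
    have "R `` C = R `` {x}"
      using assms(1) assms(4)[OF C(1)] C(2) unfolding equiv_def trans_def sym_def by blast
    then show "D \<in> (\<lambda>C. R `` C) ` F"
      using C(1) x(2) by blast
  qed
  then show ?thesis
    using assms(2) finite_surj by blast
qed

lemma equiv_log_equiv: "equiv (\<Union>K) (log_equiv K Val)"
  unfolding equiv_def refl_on_def sym_def trans_def log_equiv_def by auto

lemma sem_finite_conjunction:
  assumes "finite F"
  shows "\<exists>\<phi>. sem K Val \<phi> = \<Union>K \<inter> \<Inter>(sem K Val ` F)"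
  using assms
proof (induction F rule: finite_induct)
  case empty
  show ?case by (rule exI[of _ Top]) simp
next
  case (insert \<psi> F)
  then obtain \<phi> where "sem K Val \<phi> = \<Union>K \<inter> \<Inter>(sem K Val ` F)"
    by blast
  then show ?case
    using sem_subset[of K Val \<psi>] by (intro exI[of _ "Conj \<psi> \<phi>"]) auto
qed

lemma log_equiv_classes_separated:
  assumes C: "C \<in> \<Union>K // log_equiv K Val" and D: "D \<in> \<Union>K // log_equiv K Val" and "C \<noteq> D"
  shows "\<exists>\<psi>. C \<subseteq> sem K Val \<psi> \<and> D \<inter> sem K Val \<psi> = {}"
proof -
  let ?R = "log_equiv K Val"
  obtain x where x: "x \<in> \<Union>K" "C = ?R `` {x}"
    using C by (rule quotientE) blast
  obtain y where y: "y \<in> \<Union>K" "D = ?R `` {y}"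
    using D by (rule quotientE) blast
  have "(x, y) \<notin> ?R"
    using \<open>C \<noteq> D\<close> x(2) y(2) equiv_class_eq[OF equiv_log_equiv] by metis
  then obtain \<phi> where \<phi>: "x \<in> sem K Val \<phi> \<longleftrightarrow> y \<notin> sem K Val \<phi>"
    using x(1) y(1) unfolding log_equiv_def sat_def by blast
  have agree: "w \<in> sem K Val \<theta> \<longleftrightarrow> v \<in> sem K Val \<theta>" if "w \<in> ?R `` {v}" for w v \<theta>
    using that unfolding log_equiv_def sat_def by blast
  show ?thesis
  proof (cases "x \<in> sem K Val \<phi>")
    case True
    then show ?thesis
      using \<phi> x(2) y(2) agree by (intro exI[of _ \<phi>]) blast
  next
    case False
    have "C \<subseteq> \<Union>K"
      using x(2) unfolding log_equiv_def by blast
    then show ?thesis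
      using False \<phi> x(2) y(2) agree by (intro exI[of _ "Neg \<phi>"]) auto
  qed
qed

lemma quotient_class_eq_Inter_separating:
  assumes R: "equiv A R" and C: "C \<in> A // R"
    and S: "\<forall>D\<in>A // R - {C}. C \<subseteq> S D \<and> D \<inter> S D = {}"
  shows "A \<inter> (\<Inter>D\<in>A // R - {C}. S D) = C"
proof
  show "C \<subseteq> A \<inter> (\<Inter>D\<in>A // R - {C}. S D)"
    using in_quotient_imp_subset[OF R C] S by blast
  show "A \<inter> (\<Inter>D\<in>A // R - {C}. S D) \<subseteq> C"
  proof
    fix z assume z: "z \<in> A \<inter> (\<Inter>D\<in>A // R - {C}. S D)"
    then have "z \<in> A" by blast
    have z_class: "R `` {z} \<in> A // R"
      using \<open>z \<in> A\<close> by (rule quotientI)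
    have self: "z \<in> R `` {z}"
      using \<open>z \<in> A\<close> by (rule equiv_class_self[OF R])
    have "R `` {z} = C"
    proof (rule ccontr)
      assume "R `` {z} \<noteq> C"
      then have D: "R `` {z} \<in> A // R - {C}"
        using z_class by blast
      then have "z \<in> S (R `` {z})"
        using z by blast
      with self show False
        using conjunct2[OF bspec[OF S D]] by blast
    qed
    then show "z \<in> C"
      using self by blast
  qed
qed

lemma log_equiv_class_definable:
  assumes fin: "finite (\<Union>K // log_equiv K Val)" and C: "C \<in> \<Union>K // log_equiv K Val"
  shows "\<exists>\<phi>. sem K Val \<phi> = C"
proof -
  let ?others = "\<Union>K // log_equiv K Val - {C}"
  have "\<forall>D\<in>?others. \<exists>\<psi>. C \<subseteq> sem K Val \<psi> \<and> D \<inter> sem K Val \<psi> = {}"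
    using log_equiv_classes_separated[OF C] by blast
  then have "\<exists>\<psi>. \<forall>D\<in>?others. C \<subseteq> sem K Val (\<psi> D) \<and> D \<inter> sem K Val (\<psi> D) = {}"
    by (rule bchoice)
  then obtain \<psi> where \<psi>: "\<forall>D\<in>?others. C \<subseteq> sem K Val (\<psi> D) \<and> D \<inter> sem K Val (\<psi> D) = {}"
    by blast
  have "finite (\<psi> ` ?others)"
    using fin by simp
  then have "\<exists>\<phi>. sem K Val \<phi> = \<Union>K \<inter> \<Inter>(sem K Val ` \<psi> ` ?others)"
    by (rule sem_finite_conjunction)
  then obtain \<phi> where "sem K Val \<phi> = \<Union>K \<inter> (\<Inter>D\<in>?others. sem K Val (\<psi> D))"
    by (auto simp: image_image)
  also have "\<dots> = C"
    by (rule quotient_class_eq_Inter_separating[OF equiv_log_equiv C \<psi>])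
  finally show ?thesis ..
qed

theorem mainTheorem3:
  fixes K :: "'a::euclidean_space set set" and Val :: "'p::finite \<Rightarrow> 'a set"
  assumes "polyhedral_model K Val"
  shows "finite ((\<Union>K) // log_equiv K Val)
    \<and> (\<forall>C \<in> (\<Union>K) // log_equiv K Val. \<exists>\<phi>. \<forall>x \<in> \<Union>K. sat K Val x \<phi> \<longleftrightarrow> x \<in> C)"
proof
  have K: "simplicial_complex K"
    using assms by (simp add: polyhedral_model_def)
  show fin: "finite (\<Union>K // log_equiv K Val)"
  proof (rule finite_quotient_if_finite_cover[OF equiv_log_equiv finite_cells[OF K]])
    show "\<Union>K \<subseteq> \<Union>(cells K)"
      using simplicial_complex_Union_cells[OF K] by simp
    show "C \<times> C \<subseteq> log_equiv K Val" if "C \<in> cells K" for C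
      by (rule cell_subset_log_equiv[OF assms that])
  qed
  show "\<forall>C \<in> \<Union>K // log_equiv K Val. \<exists>\<phi>. \<forall>x \<in> \<Union>K. sat K Val x \<phi> \<longleftrightarrow> x \<in> C"
    using log_equiv_class_definable[OF fin] by (auto simp: sat_def)
qed

end
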